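(* A strongly regular graph with parameters $(76,30,8,14)$ does not contain $K_5$ (complete graph on $5$ vertices) as a subgraph.
   Context: A graph is strongly regular with parameters $(v,k,\lambda,\mu)$ if it has $v$ vertices, is $k$-regular, adjacent vertices have exactly $\lambda$ common neighbours and distinct non-adjacent vertices have exactly $\mu$ common neighbours. *)

theory Defs
  imports Main
begin

definition simple_graph :: "'a set \<Rightarrow> ('a \<Rightarrow> 'a \<Rightarrow> bool) \<Rightarrow> bool" where
  "simple_graph V E \<longleftrightarrow> finite V \<and>
     (\<forall>x y. E x y \<longrightarrow> x \<in> V \<and> y \<in> V) \<and>
     (\<forall>x y. E x y \<longrightarrow> E y x) \<and> (\<forall>x. \<not> E x x)"

definition neighbours :: "'a set \<Rightarrow> ('a \<Rightarrow> 'a \<Rightarrow> bool) \<Rightarrow> 'a \<Rightarrow> 'a set" where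
  "neighbours V E x = {y \<in> V. E x y}"

definition strongly_regular ::
  "'a set \<Rightarrow> ('a \<Rightarrow> 'a \<Rightarrow> bool) \<Rightarrow> nat \<Rightarrow> nat \<Rightarrow> nat \<Rightarrow> nat \<Rightarrow> bool" where
  "strongly_regular V E v k lam mu \<longleftrightarrow> simple_graph V E \<and> card V = v \<and>
     (\<forall>x\<in>V. card (neighbours V E x) = k) \<and>
     (\<forall>x\<in>V. \<forall>y\<in>V. E x y \<longrightarrow> card (neighbours V E x \<inter> neighbours V E y) = lam) \<and>
     (\<forall>x\<in>V. \<forall>y\<in>V. x \<noteq> y \<and> \<not> E x y \<longrightarrow> card (neighbours V E x \<inter> neighbours V E y) = mu)"

definition contains_clique :: "'a set \<Rightarrow> ('a \<Rightarrow> 'a \<Rightarrow> bool) \<Rightarrow> nat \<Rightarrow> bool" where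
  "contains_clique V E n \<longleftrightarrow> (\<exists>C. C \<subseteq> V \<and> card C = n \<and>
     (\<forall>x\<in>C. \<forall>y\<in>C. x \<noteq> y \<longrightarrow> E x y))"

end

theory Submission
  imports Defs "HOL-Analysis.Convex"
begin

(* Let C be a clique of size c in a strongly regular graph with
   parameters (v,k,lam,mu), let W = V - C be the v - c remaining vertices, and
   for w in W let s(w) be the number of vertices of C adjacent to w.  Double
   counting the pairs (w,x) and triples (w,x,y) with w adjacent to x,y in C gives
     sum s(w)   = c (k - c + 1),
     sum s(w)^2 = c (k - c + 1) + c (c - 1) (lam - c + 2),
   because a vertex of C has exactly c - 1 of its k neighbours inside C, and two
   vertices of C have exactly c - 2 of their lam common neighbours inside C.
   The inequality between arithmetic and quadratic mean, (sum s)^2 <= |W| sum s^2,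
   then bounds the clique size.  For (76,30,8,14) and c = 5 the moments are 130 and
   230, and 130^2 = 16900 > 16330 = 71 * 230, so there is no 5-clique. *)

definition is_clique :: "('a \<Rightarrow> 'a \<Rightarrow> bool) \<Rightarrow> 'a set \<Rightarrow> bool" where
  "is_clique E C \<longleftrightarrow> (\<forall>x\<in>C. \<forall>y\<in>C. x \<noteq> y \<longrightarrow> E x y)"

lemma card_filter_eq_sum_of_bool:
  assumes "finite A"
  shows "card {x\<in>A. P x} = (\<Sum>x\<in>A. of_bool (P x))"
proof -
  have "{x\<in>A. P x} = A \<inter> {x. P x}" by blast
  then show ?thesis using assms by simp
qed

lemma double_count_pairs:
  assumes "finite W" "finite C"
  shows "(\<Sum>w\<in>W. card {x\<in>C. R w x}) = (\<Sum>x\<in>C. card {w\<in>W. R w x})"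
proof -
  have "(\<Sum>w\<in>W. card {x\<in>C. R w x}) = (\<Sum>w\<in>W. \<Sum>x\<in>C. of_bool (R w x))"
    using assms by (simp add: card_filter_eq_sum_of_bool)
  also have "\<dots> = (\<Sum>x\<in>C. \<Sum>w\<in>W. of_bool (R w x))"
    by (rule sum.swap)
  also have "\<dots> = (\<Sum>x\<in>C. card {w\<in>W. R w x})"
    using assms by (simp add: card_filter_eq_sum_of_bool)
  finally show ?thesis .
qed

lemma double_count_triples:
  assumes "finite W" "finite C"
  shows "(\<Sum>w\<in>W. (card {x\<in>C. R w x})\<^sup>2) =
         (\<Sum>x\<in>C. \<Sum>y\<in>C. card {w\<in>W. R w x \<and> R w y})"
proof -
  have "(\<Sum>w\<in>W. (card {x\<in>C. R w x})\<^sup>2) =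
        (\<Sum>w\<in>W. \<Sum>x\<in>C. \<Sum>y\<in>C. of_bool (R w x \<and> R w y))"
    unfolding card_filter_eq_sum_of_bool[OF assms(2)] power2_eq_square sum_product of_bool_conj
    by (rule refl)
  also have "\<dots> = (\<Sum>x\<in>C. \<Sum>w\<in>W. \<Sum>y\<in>C. of_bool (R w x \<and> R w y))"
    by (rule sum.swap)
  also have "\<dots> = (\<Sum>x\<in>C. \<Sum>y\<in>C. \<Sum>w\<in>W. of_bool (R w x \<and> R w y))"
    by (intro sum.cong refl sum.swap)
  also have "\<dots> = (\<Sum>x\<in>C. \<Sum>y\<in>C. card {w\<in>W. R w x \<and> R w y})"
    using assms by (simp add: card_filter_eq_sum_of_bool)
  finally show ?thesis .
qed

text \<open>A clique vertex x has exactly card C - 1 neighbours inside the clique, so the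
  remaining ones lie outside it.\<close>
lemma clique_vertex_outside_neighbours:
  assumes G: "simple_graph V E" and C: "C \<subseteq> V" "is_clique E C" and x: "x \<in> C"
  shows "card {w\<in>V - C. E w x} = card (neighbours V E x) - (card C - 1)"
proof -
  have fV: "finite V" and sym: "\<And>x y. E x y \<Longrightarrow> E y x" and irr: "\<And>x. \<not> E x x"
    using G unfolding simple_graph_def by auto
  have fC: "finite C" using C fV finite_subset by blast
  have "{w\<in>V - C. E w x} = neighbours V E x - C"
    unfolding neighbours_def using sym by auto
  moreover have "neighbours V E x \<inter> C = C - {x}"
    unfolding neighbours_def using C(1) C(2)[unfolded is_clique_def] x irr by auto
  then have "card (neighbours V E x \<inter> C) = card C - 1"
    using x fC by simp
  moreover have "finite (neighbours V E x)"
    unfolding neighbours_def using fV by simp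
  ultimately show ?thesis
    by (simp add: card_Diff_subset_Int)
qed

text \<open>Two distinct clique vertices have exactly card C - 2 common neighbours inside
  the clique.\<close>
lemma clique_pair_outside_common_neighbours:
  assumes G: "simple_graph V E" and C: "C \<subseteq> V" "is_clique E C"
    and xy: "x \<in> C" "y \<in> C" "x \<noteq> y"
  shows "card {w\<in>V - C. E w x \<and> E w y} =
         card (neighbours V E x \<inter> neighbours V E y) - (card C - 2)"
proof -
  have fV: "finite V" and sym: "\<And>x y. E x y \<Longrightarrow> E y x" and irr: "\<And>x. \<not> E x x"
    using G unfolding simple_graph_def by auto
  have fC: "finite C" using C fV finite_subset by blast
  let ?N = "neighbours V E x \<inter> neighbours V E y"
  have "{w\<in>V - C. E w x \<and> E w y} = ?N - C"
    unfolding neighbours_def using sym by auto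
  moreover have "?N \<inter> C = C - {x, y}"
    unfolding neighbours_def using C(1) C(2)[unfolded is_clique_def] xy irr by auto
  then have "card (?N \<inter> C) = card C - 2"
    using xy fC by (simp add: card_Diff_subset)
  moreover have "finite ?N"
    unfolding neighbours_def using fV by simp
  ultimately show ?thesis
    by (simp add: card_Diff_subset_Int)
qed

lemma srg_clique_first_moment:
  assumes srg: "strongly_regular V E v k lam mu" and C: "C \<subseteq> V" "is_clique E C"
  shows "(\<Sum>w\<in>V - C. card {x\<in>C. E w x}) = card C * (k - (card C - 1))"
proof -
  have G: "simple_graph V E" and deg: "\<forall>x\<in>V. card (neighbours V E x) = k"
    using srg unfolding strongly_regular_def by auto
  have fV: "finite V" using G unfolding simple_graph_def by simp
  have fC: "finite C" using C fV finite_subset by blast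
  have "(\<Sum>w\<in>V - C. card {x\<in>C. E w x}) = (\<Sum>x\<in>C. card {w\<in>V - C. E w x})"
    using fV fC by (intro double_count_pairs) auto
  also have "\<dots> = (\<Sum>x\<in>C. k - (card C - 1))"
    using clique_vertex_outside_neighbours[OF G C] deg C by (intro sum.cong) auto
  finally show ?thesis by simp
qed

lemma srg_clique_second_moment:
  assumes srg: "strongly_regular V E v k lam mu" and C: "C \<subseteq> V" "is_clique E C"
  shows "(\<Sum>w\<in>V - C. (card {x\<in>C. E w x})\<^sup>2) =
         card C * (k - (card C - 1)) + card C * (card C - 1) * (lam - (card C - 2))"
proof -
  have G: "simple_graph V E" and deg: "\<forall>x\<in>V. card (neighbours V E x) = k"
    and lam: "\<forall>x\<in>V. \<forall>y\<in>V. E x y \<longrightarrow> card (neighbours V E x \<inter> neighbours V E y) = lam"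
    using srg unfolding strongly_regular_def by auto
  have fV: "finite V" using G unfolding simple_graph_def by simp
  have fC: "finite C" using C fV finite_subset by blast
  define g where "g x y = card {w\<in>V - C. E w x \<and> E w y}" for x y
  have row: "(\<Sum>y\<in>C. g x y) = (k - (card C - 1)) + (card C - 1) * (lam - (card C - 2))"
    if x: "x \<in> C" for x
  proof -
    have "g x x = k - (card C - 1)"
      using clique_vertex_outside_neighbours[OF G C x] deg C x unfolding g_def by auto
    moreover have "g x y = lam - (card C - 2)" if y: "y \<in> C - {x}" for y
    proof -
      have "E x y" using C(2) x y unfolding is_clique_def by auto
      then have "card (neighbours V E x \<inter> neighbours V E y) = lam"
        using lam C(1) x y by auto
      then show ?thesis
        using clique_pair_outside_common_neighbours[OF G C x] y unfolding g_def by auto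
    qed
    ultimately show ?thesis
      using x fC by (simp add: sum.remove)
  qed
  have "(\<Sum>w\<in>V - C. (card {x\<in>C. E w x})\<^sup>2) = (\<Sum>x\<in>C. \<Sum>y\<in>C. g x y)"
    unfolding g_def using fV fC by (intro double_count_triples) auto
  also have "\<dots> = card C * ((k - (card C - 1)) + (card C - 1) * (lam - (card C - 2)))"
    using row by simp
  finally show ?thesis by (simp only: distrib_left mult.assoc)
qed

text \<open>Clique bound for strongly regular graphs, from the inequality between the
  arithmetic and the quadratic mean of the clique degrees of the outside vertices.\<close>
theorem srg_clique_bound:
  assumes srg: "strongly_regular V E v k lam mu" and C: "C \<subseteq> V" "is_clique E C"
  defines "c \<equiv> card C"
  shows "(c * (k - (c - 1)))\<^sup>2 \<le>
         (v - c) * (c * (k - (c - 1)) + c * (c - 1) * (lam - (c - 2)))"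
proof -
  have cV: "card V = v" and fV: "finite V"
    using srg unfolding strongly_regular_def simple_graph_def by auto
  define s where "s w = card {x\<in>C. E w x}" for w
  have "(\<Sum>w\<in>V - C. real (s w))\<^sup>2 \<le> (\<Sum>w\<in>V - C. (real (s w))\<^sup>2) * card (V - C)"
    by (rule sum_squared_le_sum_of_squares)
  then have "real ((\<Sum>w\<in>V - C. s w)\<^sup>2) \<le> real ((\<Sum>w\<in>V - C. (s w)\<^sup>2) * card (V - C))"
    by (simp only: of_nat_mult of_nat_power of_nat_sum)
  then have mean_ineq: "(\<Sum>w\<in>V - C. s w)\<^sup>2 \<le> (\<Sum>w\<in>V - C. (s w)\<^sup>2) * card (V - C)"
    by (simp only: of_nat_le_iff)
  have "card (V - C) = v - c"
    using card_Diff_subset[OF finite_subset[OF C(1) fV] C(1)] cV unfolding c_def by simp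
  with mean_ineq show ?thesis
    using srg_clique_first_moment[OF srg C] srg_clique_second_moment[OF srg C]
    unfolding s_def c_def by (simp only: mult.commute)
qed

theorem mainTheorem8:
  fixes V :: "'a set" and E :: "'a \<Rightarrow> 'a \<Rightarrow> bool"
  assumes "strongly_regular V E 76 30 8 14"
  shows "\<not> contains_clique V E 5"
proof
  assume "contains_clique V E 5"
  then obtain C where "C \<subseteq> V" "is_clique E C" "card C = 5"
    unfolding contains_clique_def is_clique_def by blast
  from srg_clique_bound[OF assms this(1,2)] and \<open>card C = 5\<close>
  have "(130::nat)\<^sup>2 \<le> 71 * 230" by simp
  then show False by simp
qed

end
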